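(* Let $a\ge 2$ be an integer, let $p\in[0,1]$, and let $\lambda(z)=\sum_{i\ge1}\lambda_i z^i$ and $\rho(z)=\sum_{i\ge1}\rho_i z^i$ be degree-distribution polynomials, i.e. $\lambda_i,\rho_i\ge 0$, $\sum_{i\ge1}\lambda_i=\sum_{i\ge1}\rho_i=1$, and $\lambda'(1)=\sum_{i\ge1} i\lambda_i<\infty$. For $x\in[0,1]$ define $$A(x)=x+(1-x)\bigl(1-\lambda(1-px)\bigr),\qquad B(x)=1-\bigl(1-A(x)\bigr)^{a-1}\Bigl[1-\rho\bigl(A(x)^{a}\bigr)\Bigr],\qquad f(x)=A(x)\,B(x).$$ Let $x_0=\epsilon\in[0,1]$ and $x_l=f(x_{l-1})$ for $l\ge1$. If $$x_0<\frac{1}{(a-1)\bigl(1+p\,\lambda'(1)\bigr)^{2}},$$ then the system heals, i.e. $x_l\to 0$ as $l\to\infty$.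
   Context: This is the density-evolution recursion for a cyber-physical system model with no missing messages. The physical network has degree distribution $\lambda$ ($\lambda_i$ = fraction of physical nodes with $i$ physical neighbours), the cyber network has degree distribution $\rho$ ($\rho_i$ = fraction of cyber nodes with $i$ cyber neighbours), each cyber node controls exactly $a$ physical nodes and each physical node is attached to exactly one cyber node. Each physical node initially fails independently with probability $\epsilon$; a failed physical node defects each physical neighbour with probability $p$. $x_l$ denotes the probability (density) that a physical node is failed after $l$ iterations of message passing, and "the system heals" means $x_l\to0$ as $l\to\infty$. Here $\lambda'(1)$ is the derivative of $\lambda$ at $z=1$, i.e. the average physical degree. *)

theory Defs
  imports Complex_Main
begin

definition degree_dist :: "(nat \<Rightarrow> real) \<Rightarrow> bool" where
  "degree_dist c \<longleftrightarrow> (\<forall>i. c i \<ge> 0) \<and> c 0 = 0 \<and> c sums 1"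

definition genfun :: "(nat \<Rightarrow> real) \<Rightarrow> real \<Rightarrow> real" where
  "genfun c z = (\<Sum>i. c i * z ^ i)"

text \<open>Derivative at 1, i.e. the average degree  c'(1) = sum_i i c_i.\<close>
definition avg_deg :: "(nat \<Rightarrow> real) \<Rightarrow> real" where
  "avg_deg c = (\<Sum>i. real i * c i)"

definition A_fun :: "(nat \<Rightarrow> real) \<Rightarrow> real \<Rightarrow> real \<Rightarrow> real" where
  "A_fun lam p x = x + (1 - x) * (1 - genfun lam (1 - p * x))"

definition B_fun :: "nat \<Rightarrow> (nat \<Rightarrow> real) \<Rightarrow> (nat \<Rightarrow> real) \<Rightarrow> real \<Rightarrow> real \<Rightarrow> real" where
  "B_fun a lam rho p x =
     1 - (1 - A_fun lam p x) ^ (a - 1) * (1 - genfun rho (A_fun lam p x ^ a))"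

definition f_fun :: "nat \<Rightarrow> (nat \<Rightarrow> real) \<Rightarrow> (nat \<Rightarrow> real) \<Rightarrow> real \<Rightarrow> real \<Rightarrow> real" where
  "f_fun a lam rho p x = A_fun lam p x * B_fun a lam rho p x"

definition DE_seq :: "nat \<Rightarrow> (nat \<Rightarrow> real) \<Rightarrow> (nat \<Rightarrow> real) \<Rightarrow> real \<Rightarrow> real \<Rightarrow> nat \<Rightarrow> real" where
  "DE_seq a lam rho p eps l = (f_fun a lam rho p ^^ l) eps"

end

theory Submission
  imports Defs
begin

text \<open>
  Write n = a - 1, d = \<lambda>'(1) and c = 1 + p d. Since \<lambda>(1 - t) \<ge> 1 - d t and \<rho>(z) \<le> z,
  A(x) \<le> c x and f(x) \<le> A (1 - (1 - A)^n (1 - A^a)). For n \<ge> 2 the binomial expansion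
  of (1 - A)^n truncated after the cubic term gives f(x) \<le> n A^2 \<le> n c^2 x^2, which is
  below x as long as n c^2 x < 1. For a = 2 this estimate is too weak; there we use the
  cubic truncation of 1 - \<lambda>(1 - t) as well, and with r = \<surd>x the inequality f(x) < x
  reduces to polynomial inequalities in r, certified by Bernstein expansions. In both
  cases f(x) \<le> g(x) < x on (0, \<epsilon>] for a continuous g, so the decreasing iterates
  converge to a point L with L \<le> g(L), which forces L = 0.
\<close>

lemma summable_degree_dist_power:
  assumes "degree_dist c" "\<bar>z\<bar> \<le> 1"
  shows "summable (\<lambda>i. c i * z ^ i)"
proof (rule summable_comparison_test)
  have c: "\<And>i. c i \<ge> 0" "summable c"
    using assms(1) unfolding degree_dist_def by (auto simp: sums_iff)
  show "\<exists>N. \<forall>n\<ge>N. norm (c n * z ^ n) \<le> c n"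
  proof (intro exI allI impI)
    fix n :: nat
    have "\<bar>z\<bar> ^ n \<le> 1" using assms(2) by (simp add: power_le_one)
    then show "norm (c n * z ^ n) \<le> c n"
      using c(1)[of n] by (simp add: abs_mult power_abs mult_left_le)
  qed
  show "summable c" by (fact c(2))
qed

lemma genfun_sums:
  "degree_dist c \<Longrightarrow> \<bar>z\<bar> \<le> 1 \<Longrightarrow> (\<lambda>i. c i * z ^ i) sums genfun c z"
  unfolding genfun_def by (intro summable_sums summable_degree_dist_power)

lemma genfun_one: "degree_dist c \<Longrightarrow> genfun c 1 = 1"
  unfolding genfun_def degree_dist_def by (simp add: sums_iff)

lemma genfun_nonneg: "degree_dist c \<Longrightarrow> 0 \<le> z \<Longrightarrow> z \<le> 1 \<Longrightarrow> 0 \<le> genfun c z"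
  unfolding genfun_def
  by (rule suminf_nonneg) (auto simp: summable_degree_dist_power degree_dist_def)

lemma genfun_le:
  assumes "degree_dist c" "0 \<le> z" "z \<le> 1"
  shows "genfun c z \<le> z"
proof -
  have c: "\<And>i. c i \<ge> 0" "c 0 = 0" "c sums 1"
    using assms(1) unfolding degree_dist_def by auto
  have "c i * z ^ i \<le> c i * z" for i
  proof (cases i)
    case (Suc j)
    then have "z ^ i \<le> z" using assms by (simp add: mult_left_le power_le_one)
    then show ?thesis using c(1)[of i] by (simp add: mult_left_mono)
  qed (use c(2) in simp)
  from sums_le[OF this genfun_sums sums_mult2[OF c(3)]] assms show ?thesis by simp
qed

lemma avg_deg_sums:
  "summable (\<lambda>i. real i * c i) \<Longrightarrow> (\<lambda>i. real i * c i) sums avg_deg c"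
  unfolding avg_deg_def by (simp add: summable_sums)

lemma avg_deg_ge_one:
  assumes "degree_dist c" "summable (\<lambda>i. real i * c i)"
  shows "1 \<le> avg_deg c"
proof -
  have c: "\<And>i. c i \<ge> 0" "c 0 = 0" "c sums 1"
    using assms(1) unfolding degree_dist_def by auto
  have "c i \<le> real i * c i" for i
    using c(1)[of i] c(2) by (cases i) (auto simp: algebra_simps)
  from sums_le[OF this c(3) avg_deg_sums[OF assms(2)]] show ?thesis .
qed

lemma power_one_minus_ge_linear:
  fixes t :: real
  assumes "0 \<le> t" "t \<le> 1"
  shows "(1 - t)^k * (1 - (real i - real k) * t) \<le> (1 - t)^i"
proof (cases "k \<le> i")
  case True
  then obtain m where i: "i = k + m" by (metis le_add_diff_inverse)
  have "1 + real m * (-t) \<le> (1 + (-t))^m" by (rule Bernoulli_inequality) (use assms in simp)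
  then have "(1 - t)^k * (1 - real m * t) \<le> (1 - t)^k * (1 - t)^m"
    using assms by (intro mult_left_mono) auto
  then show ?thesis using i by (simp add: power_add)
next
  case False
  then obtain m where k: "k = i + m" by (metis le_add_diff_inverse nat_le_linear)
  have "(1 - t)^m * (1 + real m * t) \<le> (1 - t)^m * (1 + t)^m"
    using Bernoulli_inequality[of t m] assms by (intro mult_left_mono) auto
  also have "\<dots> = (1 - t^2)^m"
    by (simp add: power_mult_distrib[symmetric] power2_eq_square algebra_simps)
  also have "\<dots> \<le> 1" using assms by (intro power_le_one) (auto simp: power_le_one)
  finally have "(1 - t)^m * (1 + real m * t) \<le> 1" .
  then have "(1 - t)^i * ((1 - t)^m * (1 + real m * t)) \<le> (1 - t)^i * 1"
    using assms by (intro mult_left_mono) auto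
  then show ?thesis using k by (simp add: power_add algebra_simps)
qed

text \<open>A tangent-line bound for the convex function k \<mapsto> (1 - t)^k, averaged over the degrees.\<close>
lemma genfun_one_minus_ge:
  assumes dd: "degree_dist c" and sm: "summable (\<lambda>i. real i * c i)" and t: "0 \<le> t" "t \<le> 1"
  shows "(1 - t)^k * (1 - (avg_deg c - real k) * t) \<le> genfun c (1 - t)"
proof -
  have c: "\<And>i. c i \<ge> 0" "c sums 1" using dd unfolding degree_dist_def by auto
  have "(\<lambda>i. (1 - t)^k * (c i * (1 + real k * t) - t * (real i * c i)))
          sums ((1 - t)^k * (1 * (1 + real k * t) - t * avg_deg c))"
    by (intro sums_mult sums_diff sums_mult2 c(2) avg_deg_sums sm)
  then have lhs: "(\<lambda>i. c i * ((1 - t)^k * (1 - (real i - real k) * t)))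
                    sums ((1 - t)^k * (1 - (avg_deg c - real k) * t))"
    by (simp add: algebra_simps)
  have "c i * ((1 - t)^k * (1 - (real i - real k) * t)) \<le> c i * (1 - t)^i" for i
    using power_one_minus_ge_linear[OF t] c(1) by (intro mult_left_mono) auto
  from sums_le[OF this lhs genfun_sums[OF dd]] t show ?thesis by simp
qed

lemma one_minus_genfun_le:
  assumes "degree_dist c" "summable (\<lambda>i. real i * c i)" "0 \<le> t" "t \<le> 1"
  shows "1 - genfun c (1 - t) \<le> avg_deg c * t"
  using genfun_one_minus_ge[OF assms, of 0] by (simp add: algebra_simps)

lemma falling_factorial3_nonneg: "0 \<le> real k * (real k - 1) * (real k - 2)"
proof (cases "k \<ge> 2")
  case False
  then have "k = 0 \<or> k = 1" by auto
  then show ?thesis by auto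
qed simp

text \<open>The binomial series of 1 - (1 - t)^u truncated after the cubic term.\<close>
definition binom_trunc3 :: "real \<Rightarrow> real \<Rightarrow> real" where
  "binom_trunc3 u t = u * t - u * (u - 1) / 2 * t^2 + u * (u - 1) * (u - 2) / 6 * t^3"

lemma binom_trunc3_power_le:
  fixes t :: real
  assumes "0 \<le> t" "t \<le> 1"
  shows "1 - binom_trunc3 (real k) t \<le> (1 - t)^k"
proof (induction k)
  case (Suc k)
  have "1 - binom_trunc3 (real (Suc k)) t
      = (1 - t) * (1 - binom_trunc3 (real k) t) - real k * (real k - 1) * (real k - 2) / 6 * t^4"
    unfolding binom_trunc3_def
    by (simp add: field_simps power2_eq_square power3_eq_cube power4_eq_xxxx)
  also have "\<dots> \<le> (1 - t) * (1 - binom_trunc3 (real k) t)"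
    using falling_factorial3_nonneg[of k] assms by simp
  also have "\<dots> \<le> (1 - t) * (1 - t)^k" using Suc assms by (intro mult_left_mono) auto
  finally show ?case by simp
qed (simp add: binom_trunc3_def)

lemma binom_trunc3_add_le:
  fixes K del t :: real
  assumes "0 \<le> del" "del \<le> 1" "0 \<le> t" "0 \<le> K" "(K + del) * t \<le> 1" "0 \<le> K * (K - 1) * (K - 2)"
  shows "1 - binom_trunc3 (K + del) t \<le> (1 - binom_trunc3 K t) * (1 - del * t)"
proof -
  have "(K - (2 - del) / 3) * t \<le> (K + del) * t"
    using assms by (intro mult_right_mono) (simp_all add: field_simps)
  then have "0 \<le> del * (1 - del) / 2 * t^2 * (1 - (K - (2 - del) / 3) * t)"
    using assms by simp
  moreover have "0 \<le> del * (K * (K - 1) * (K - 2)) / 6 * t^4" using assms by simp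
  moreover have "(1 - binom_trunc3 K t) * (1 - del * t) - (1 - binom_trunc3 (K + del) t)
     = del * (1 - del) / 2 * t^2 * (1 - (K - (2 - del) / 3) * t) + del * (K * (K - 1) * (K - 2)) / 6 * t^4"
    unfolding binom_trunc3_def
    by (simp add: field_simps power2_eq_square power3_eq_cube power4_eq_xxxx)
  ultimately show ?thesis by linarith
qed

lemma binom_trunc3_scale_le:
  fixes p d x :: real
  assumes "0 \<le> p" "p \<le> 1" "0 \<le> d" "0 \<le> x" "p * d * x \<le> 1"
  shows "binom_trunc3 d (p * x) \<le> binom_trunc3 (p * d) x"
proof -
  have "(3 * (p * d) - 2 - 2 * p) * x / 3 \<le> p * d * x" using assms by (simp add: algebra_simps)
  then have "0 \<le> p * d * (1 - p) * x^2 / 2 * (1 - (3 * (p * d) - 2 - 2 * p) * x / 3)"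
    using assms by simp
  moreover have "binom_trunc3 (p * d) x - binom_trunc3 d (p * x)
      = p * d * (1 - p) * x^2 / 2 * (1 - (3 * (p * d) - 2 - 2 * p) * x / 3)"
    unfolding binom_trunc3_def by (simp add: field_simps power2_eq_square power3_eq_cube)
  ultimately show ?thesis by linarith
qed

lemma binom_trunc3_mono:
  assumes "0 \<le> u" "u \<le> U" "0 \<le> x" "x \<le> 1" "U * x \<le> 1/4"
  shows "binom_trunc3 u x \<le> binom_trunc3 U x"
proof -
  have "u * x \<le> U * x" using assms by (intro mult_right_mono) auto
  then have ux: "(U + u) * x \<le> 1/2" using assms by (simp add: algebra_simps)
  have "(U + u) * x^2 = ((U + u) * x) * x" by (simp add: power2_eq_square)
  also have "\<dots> \<le> (1/2) * 1" using ux assms by (intro mult_mono) auto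
  finally have ux2: "(U + u) * x^2 \<le> 1/2" by simp
  have "0 \<le> (U^2 + U * u + u^2) * x^2" using assms by simp
  have "1 - (U + u - 1) * x / 2 + (U^2 + U * u + u^2 - 3 * (U + u) + 2) * x^2 / 6
      = 1 - ((U + u) * x) / 2 + x / 2 + ((U^2 + U * u + u^2) * x^2) / 6 - ((U + u) * x^2) / 2 + x^2 / 3"
    by (simp add: field_simps)
  also have "\<dots> \<ge> 0"
    using ux ux2 \<open>0 \<le> (U^2 + U * u + u^2) * x^2\<close> assms zero_le_power2[of x] by linarith
  finally have br: "0 \<le> 1 - (U + u - 1) * x / 2 + (U^2 + U * u + u^2 - 3 * (U + u) + 2) * x^2 / 6" .
  have "0 \<le> (U - u) * x * (1 - (U + u - 1) * x / 2 + (U^2 + U * u + u^2 - 3 * (U + u) + 2) * x^2 / 6)"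
    using br assms by (intro mult_nonneg_nonneg) auto
  also have "\<dots> = binom_trunc3 U x - binom_trunc3 u x"
    unfolding binom_trunc3_def by (simp add: field_simps power2_eq_square power3_eq_cube)
  finally show ?thesis by simp
qed

text \<open>Split the average degree d = K + \<delta> into its integer part K and its fractional part \<delta>,
  and combine the tangent bound at K with the cubic truncation of (1 - t)^K.\<close>
lemma one_minus_genfun_le_binom_trunc3:
  assumes dd: "degree_dist c" and sm: "summable (\<lambda>i. real i * c i)"
    and t: "0 \<le> t" "t \<le> 1" and dt: "avg_deg c * t \<le> 1"
  shows "1 - genfun c (1 - t) \<le> binom_trunc3 (avg_deg c) t"
proof -
  define k where "k = nat \<lfloor>avg_deg c\<rfloor>"
  define del where "del = avg_deg c - real k"
  have "1 \<le> avg_deg c" by (rule avg_deg_ge_one[OF dd sm])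
  then have "real k \<le> avg_deg c" "avg_deg c < real k + 1"
    unfolding k_def by (auto simp: of_nat_nat)
  then have del: "0 \<le> del" "del \<le> 1" and d: "avg_deg c = real k + del"
    unfolding del_def by auto
  have "1 - binom_trunc3 (avg_deg c) t \<le> (1 - binom_trunc3 (real k) t) * (1 - del * t)"
    unfolding d using binom_trunc3_add_le[OF del t(1)] falling_factorial3_nonneg[of k] dt d by simp
  also have "\<dots> \<le> (1 - t)^k * (1 - del * t)"
    using binom_trunc3_power_le[OF t] del t by (intro mult_right_mono) (auto simp: mult_le_one)
  also have "\<dots> \<le> genfun c (1 - t)"
    using genfun_one_minus_ge[OF dd sm t, of k] unfolding del_def by simp
  finally show ?thesis by simp
qed

lemma one_minus_linear_le_power_mult:
  fixes A :: real
  assumes n: "2 \<le> n" and A: "0 \<le> A" "real n * A \<le> 1"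
  shows "1 - real n * A \<le> (1 - A)^n * (1 - A^(n + 1))"
proof -
  define N where "N = real n"
  have N2: "2 \<le> N" unfolding N_def using n by simp
  have "2 * A \<le> N * A" using A N2 by (intro mult_right_mono) auto
  then have Ah: "A \<le> 1/2" using A unfolding N_def by linarith
  have b: "1 - N * A + N * (N - 1) / 2 * A^2 - N * (N - 1) * (N - 2) / 6 * A^3 \<le> (1 - A)^n"
    using binom_trunc3_power_le[OF A(1), of n] Ah unfolding N_def binom_trunc3_def by simp
  have "(1 - A)^n * A^(n + 1) \<le> 1 * A^3"
    using A Ah n by (intro mult_mono power_le_one power_decreasing) auto
  then have low: "1 - N * A + N * (N - 1) / 2 * A^2 - N * (N - 1) * (N - 2) / 6 * A^3 - A^3
      \<le> (1 - A)^n * (1 - A^(n + 1))"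
    using b by (simp add: algebra_simps)
  have "N * (N - 1) * (N - 2) * A = ((N - 1) * (N - 2)) * (N * A)" by (simp add: algebra_simps)
  also have "\<dots> \<le> (N - 1) * (N - 2)" using A N2 unfolding N_def by (intro mult_left_le) auto
  finally have "N * (N - 1) * (N - 2) * A \<le> (N - 1) * (N - 2)" .
  moreover have "2 * 2 \<le> N * N" using N2 by (intro mult_mono) auto
  ultimately have "0 \<le> N * (N - 1) / 2 - (N * (N - 1) * (N - 2) / 6 + 1) * A"
    using Ah by (simp add: field_simps)
  then have "0 \<le> A^2 * (N * (N - 1) / 2 - (N * (N - 1) * (N - 2) / 6 + 1) * A)" by simp
  with low show ?thesis
    unfolding N_def[symmetric] by (simp add: field_simps power2_eq_square power3_eq_cube)
qed

text \<open>For a = 2, f(x) \<le> A (1 - (1 - A) (1 - A^2)) = maj2 A with A = A(x).\<close>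
definition maj2 :: "real \<Rightarrow> real" where
  "maj2 y = y^2 * (1 + y - y^2)"

lemma maj2_mono:
  assumes "0 \<le> y" "y \<le> z" "z \<le> 1"
  shows "maj2 y \<le> maj2 z"
proof -
  have "z^2 \<le> z" "y^2 \<le> y" "z * y \<le> z" using assms by (auto simp: power2_eq_square mult_left_le)
  then have "(z + y) * (z^2 + y^2) \<le> (z + y) * (z + y)" using assms by (intro mult_left_mono) auto
  then have "0 \<le> (z - y) * ((z + y) + (z^2 + z * y + y^2) - (z + y) * (z^2 + y^2))"
    using \<open>z * y \<le> z\<close> assms by (intro mult_nonneg_nonneg) (auto simp: algebra_simps power2_eq_square)
  also have "\<dots> = maj2 z - maj2 y"
    unfolding maj2_def by (simp add: algebra_simps power2_eq_square power3_eq_cube power4_eq_xxxx)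
  finally show ?thesis by simp
qed

lemma quartic_le_one:
  fixes r :: real
  assumes "0 \<le> r" "r \<le> 1"
  shows "r - r^3 + r^4 \<le> 1"
proof -
  have "0 \<le> (1 - r) * (1 + r^3)" using assms by simp
  also have "\<dots> = 1 - (r - r^3 + r^4)" by algebra
  finally show ?thesis by simp
qed

text \<open>The polynomial inequalities below are certified by writing the relevant difference as a
  positive constant plus a nonnegative combination of Bernstein basis polynomials.\<close>

lemma maj2_quartic_lt:
  assumes "1/2 \<le> r" "r < 1"
  shows "maj2 (r - r^3 + r^4) < r^2"
proof -
  let ?q = "241 * (1 - r)^11 + 3641 * (2*r - 1) * (1 - r)^10 + 15524 * (2*r - 1)^2 * (1 - r)^9
    + 34080 * (2*r - 1)^3 * (1 - r)^8 + 46339 * (2*r - 1)^4 * (1 - r)^7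
    + 42340 * (2*r - 1)^5 * (1 - r)^6 + 26987 * (2*r - 1)^6 * (1 - r)^5
    + 12127 * (2*r - 1)^7 * (1 - r)^4 + 3793 * (2*r - 1)^8 * (1 - r)^3
    + 791 * (2*r - 1)^9 * (1 - r)^2 + 199/2 * (2*r - 1)^10 * (1 - r) + 23/4 * (2*r - 1)^11"
  have q: "0 < 1/4 + ?q"
    using assms by (intro add_pos_nonneg add_nonneg_nonneg mult_nonneg_nonneg zero_le_power) auto
  have "r^2 - maj2 (r - r^3 + r^4) = r^3 * (1 - r)^2 * (1/4 + ?q)"
    unfolding maj2_def by algebra
  moreover have "0 < r^3 * (1 - r)^2 * (1/4 + ?q)"
    using assms by (intro mult_pos_pos q zero_less_power) auto
  ultimately show ?thesis by linarith
qed

text \<open>The Taylor polynomial of degree 5 of r^2 + (1 - r^2) binom_trunc3 (1/r - 1) r^2 at 0,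
  with the coefficient 1/6 of r^5 raised to 7/20.\<close>
definition A_majorant_poly :: "real \<Rightarrow> real" where
  "A_majorant_poly r = r - r^2 / 2 + 2/3 * r^3 - r^4 / 2 + 7/20 * r^5"

lemma maj2_A_majorant_poly_lt:
  assumes "0 < r" "r \<le> 1/2"
  shows "maj2 (A_majorant_poly r) < r^2"
proof -
  let ?q = "49/60 * (1 - 2*r)^16 + 461/20 * r * (1 - 2*r)^15 + 110033/360 * r^2 * (1 - 2*r)^14
    + 227333/90 * r^3 * (1 - 2*r)^13 + 10477123/720 * r^4 * (1 - 2*r)^12
    + 133744721/2160 * r^5 * (1 - 2*r)^11 + 724113259/3600 * r^6 * (1 - 2*r)^10
    + 5490235111/10800 * r^7 * (1 - 2*r)^9 + 65385606683/64800 * r^8 * (1 - 2*r)^8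
    + 10212658937/6480 * r^9 * (1 - 2*r)^7 + 62442620497/32400 * r^10 * (1 - 2*r)^6
    + 1180413974057/648000 * r^11 * (1 - 2*r)^5 + 421454080171/324000 * r^12 * (1 - 2*r)^4
    + 43777086917/64800 * r^13 * (1 - 2*r)^3 + 3100187521/12960 * r^14 * (1 - 2*r)^2
    + 16560153769/324000 * r^15 * (1 - 2*r) + 63316542241/12960000 * r^16"
  have q: "0 < 1/10 + ?q"
    using assms by (intro add_pos_nonneg add_nonneg_nonneg mult_nonneg_nonneg zero_le_power) auto
  have "r^2 - maj2 (A_majorant_poly r) = r^4 * (1/10 + ?q)"
    unfolding maj2_def A_majorant_poly_def by algebra
  moreover have "0 < r^4 * (1/10 + ?q)"
    using assms by (intro mult_pos_pos q zero_less_power) auto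
  ultimately show ?thesis by linarith
qed

lemma A_majorant_poly_le_one:
  assumes "0 \<le> r" "r \<le> 1/2"
  shows "A_majorant_poly r \<le> 1"
proof -
  let ?q = "9/10 * (1 - 2*r)^5 + 8 * r * (1 - 2*r)^4 + 57/2 * r^2 * (1 - 2*r)^3
    + 151/3 * r^3 * (1 - 2*r)^2 + 263/6 * r^4 * (1 - 2*r) + 887/60 * r^5"
  have "1 - A_majorant_poly r = 1/10 + ?q"
    unfolding A_majorant_poly_def by algebra
  moreover have "0 \<le> ?q"
    using assms by (intro add_nonneg_nonneg mult_nonneg_nonneg zero_le_power) auto
  ultimately show ?thesis by linarith
qed

lemma binom_trunc3_le_A_majorant_poly:
  assumes "0 < r" "r \<le> 1/2"
  shows "r^2 + (1 - r^2) * binom_trunc3 (1/r - 1) (r^2) \<le> A_majorant_poly r"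
proof -
  let ?q = "217/1200 * (1 - 2*r)^3 + 17/200 * r * (1 - 2*r)^2 + 1/300 * r^2 * (1 - 2*r)
    + 17/150 * r^3"
  define U where "U = 1/r - 1"
  have "U * r = 1 - r" using assms by (simp add: U_def field_simps)
  then have U1: "U * r^2 = r * (1 - r)" and U2: "U * (U - 1) * (r^2)^2 = r^2 * (1 - r) * (1 - 2*r)"
    and U3: "U * (U - 1) * (U - 2) * (r^2)^3 = r^3 * (1 - r) * (1 - 2*r) * (1 - 3*r)"
    by algebra+
  have "binom_trunc3 U (r^2)
      = U * r^2 - U * (U - 1) * (r^2)^2 / 2 + U * (U - 1) * (U - 2) * (r^2)^3 / 6"
    unfolding binom_trunc3_def by simp
  also have "\<dots> = r * (1 - r) - r^2 * (1 - r) * (1 - 2*r) / 2 + r^3 * (1 - r) * (1 - 2*r) * (1 - 3*r) / 6"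
    unfolding U1 U2 U3 ..
  finally have B: "binom_trunc3 U (r^2) = \<dots>" .
  have "r^2 + (1 - r^2) * binom_trunc3 U (r^2)
      = r - r^2/2 + 2/3*r^3 - r^4/2 + r^5/6 + r^6 - 11/6*r^7 + r^8"
    unfolding B by (simp add: field_simps) algebra
  moreover have "A_majorant_poly r - (r - r^2/2 + 2/3*r^3 - r^4/2 + r^5/6 + r^6 - 11/6*r^7 + r^8)
      = r^5 * (1/400 + ?q)"
    unfolding A_majorant_poly_def by algebra
  moreover have "0 \<le> r^5 * (1/400 + ?q)"
    using assms by (intro mult_nonneg_nonneg add_nonneg_nonneg zero_le_power) auto
  ultimately show ?thesis unfolding U_def by linarith
qed

lemma funpow_tendsto_0_of_majorant:
  fixes F g :: "real \<Rightarrow> real"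
  assumes F0: "F 0 = 0" and e: "0 \<le> e"
    and maj: "\<And>x. 0 < x \<Longrightarrow> x \<le> e \<Longrightarrow> 0 \<le> F x \<and> F x \<le> g x \<and> g x < x \<and> isCont g x"
  shows "(\<lambda>l. (F ^^ l) e) \<longlonglongrightarrow> 0"
proof -
  define X where "X l = (F ^^ l) e" for l
  have X_Suc: "X (Suc l) = F (X l)" for l unfolding X_def by simp
  have step: "0 \<le> F y \<and> F y \<le> y" if "0 \<le> y" "y \<le> e" for y
    using F0 maj[of y] that by (cases "y = 0") force+
  have bnd: "0 \<le> X l \<and> X l \<le> e" for l
    by (induction l) (use e step X_Suc X_def in force)+
  have "decseq X" unfolding decseq_Suc_iff using step bnd X_Suc by metis
  then obtain L where L: "X \<longlonglongrightarrow> L" "\<And>l. L \<le> X l"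
    using decseq_convergent[of X 0] bnd by blast
  have "L = 0"
  proof (rule ccontr)
    assume "L \<noteq> 0"
    with LIMSEQ_le_const[OF L(1)] bnd have L0: "0 < L" by force
    have Le: "L \<le> e" using L(2) bnd order_trans by blast
    have "X (Suc l) \<le> g (X l)" for l
      using maj[of "X l"] L(2)[of l] L0 bnd X_Suc by force
    moreover have "(\<lambda>l. X (Suc l)) \<longlonglongrightarrow> L" using L(1) by (rule LIMSEQ_Suc)
    moreover have "(\<lambda>l. g (X l)) \<longlonglongrightarrow> g L"
      using maj[OF L0 Le] by (intro isCont_tendsto_compose[OF _ L(1)]) auto
    ultimately have "L \<le> g L" by (intro LIMSEQ_le) auto
    with maj[OF L0 Le] show False by simp
  qed
  with L(1) show ?thesis unfolding X_def by simp
qed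

lemma f_fun_zero: "degree_dist lam \<Longrightarrow> f_fun a lam rho p 0 = 0"
  unfolding f_fun_def A_fun_def by (simp add: genfun_one)

lemma A_fun_bounds:
  assumes "0 \<le> p" "p \<le> 1" "degree_dist lam" "0 \<le> x" "x \<le> 1"
  shows "0 \<le> A_fun lam p x" "A_fun lam p x \<le> 1"
proof -
  have t: "0 \<le> 1 - p * x" "1 - p * x \<le> 1" using assms by (auto simp: mult_le_one)
  have "0 \<le> 1 - genfun lam (1 - p * x)" "1 - genfun lam (1 - p * x) \<le> 1"
    using genfun_le[OF assms(3) t] genfun_nonneg[OF assms(3) t] t by linarith+
  then have "0 \<le> (1 - x) * (1 - genfun lam (1 - p * x))"
    "(1 - x) * (1 - genfun lam (1 - p * x)) \<le> 1 - x"
    using assms by (auto intro: mult_left_le)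
  then show "0 \<le> A_fun lam p x" "A_fun lam p x \<le> 1"
    unfolding A_fun_def using assms by auto
qed

lemma A_fun_le:
  "x \<le> 1 \<Longrightarrow> 1 - genfun lam (1 - p * x) \<le> b \<Longrightarrow> A_fun lam p x \<le> x + (1 - x) * b"
  unfolding A_fun_def by (simp add: mult_left_mono)

lemma f_fun_le:
  assumes "0 \<le> p" "p \<le> 1" "degree_dist lam" "degree_dist rho" "0 \<le> x" "x \<le> 1"
  defines "A \<equiv> A_fun lam p x"
  shows "0 \<le> f_fun (Suc n) lam rho p x"
    and "f_fun (Suc n) lam rho p x \<le> A * (1 - (1 - A)^n * (1 - A^Suc n))"
proof -
  have A: "0 \<le> A" "A \<le> 1" using A_fun_bounds[OF assms(1-3,5,6)] A_def by auto
  then have Aa: "0 \<le> A^Suc n" "A^Suc n \<le> 1" by (auto simp: power_le_one simp del: power_Suc)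
  have r: "0 \<le> genfun rho (A^Suc n)" "genfun rho (A^Suc n) \<le> A^Suc n"
    using genfun_nonneg[OF assms(4) Aa] genfun_le[OF assms(4) Aa] by auto
  have q: "0 \<le> (1 - A)^n" "(1 - A)^n \<le> 1" using A by (auto simp: power_le_one)
  have "(1 - A)^n * (1 - A^Suc n) \<le> (1 - A)^n * (1 - genfun rho (A^Suc n))"
    using r q by (intro mult_left_mono) auto
  moreover have "(1 - A)^n * (1 - genfun rho (A^Suc n)) \<le> 1 * 1"
    using q r Aa by (intro mult_mono) auto
  ultimately have "0 \<le> B_fun (Suc n) lam rho p x"
    "B_fun (Suc n) lam rho p x \<le> 1 - (1 - A)^n * (1 - A^Suc n)"
    unfolding B_fun_def A_def[symmetric] by simp_all
  with A show "0 \<le> f_fun (Suc n) lam rho p x"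
    "f_fun (Suc n) lam rho p x \<le> A * (1 - (1 - A)^n * (1 - A^Suc n))"
    unfolding f_fun_def A_def[symmetric] by (auto intro: mult_left_mono)
qed

lemma f_fun_le_quadratic:
  assumes n: "2 \<le> n" and p: "0 \<le> p" "p \<le> 1" and lam: "degree_dist lam" and rho: "degree_dist rho"
    and sm: "summable (\<lambda>i. real i * lam i)" and x: "0 \<le> x"
    and small: "real n * (1 + p * avg_deg lam)^2 * x \<le> 1"
  shows "f_fun (Suc n) lam rho p x \<le> real n * (1 + p * avg_deg lam)^2 * x^2"
proof -
  define c where "c = 1 + p * avg_deg lam"
  have c1: "1 \<le> c" unfolding c_def using avg_deg_ge_one[OF lam sm] p by simp
  have "1 * 1 \<le> real n * c^2" using n c1 by (intro mult_mono one_le_power) auto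
  then have nc: "1 \<le> real n * c^2" by simp
  have "1 * x \<le> real n * c^2 * x" using nc x by (intro mult_right_mono) auto
  then have x1: "x \<le> 1" using small unfolding c_def[symmetric] by simp
  define A where "A = A_fun lam p x"
  have A: "0 \<le> A" "A \<le> 1" using A_fun_bounds[OF p lam x x1] A_def by auto
  have "1 - genfun lam (1 - p * x) \<le> avg_deg lam * (p * x)"
    using one_minus_genfun_le[OF lam sm] p x x1 by (simp add: mult_le_one)
  then have "A \<le> x + (1 - x) * (avg_deg lam * (p * x))" using A_fun_le x1 A_def by blast
  also have "\<dots> \<le> x + avg_deg lam * (p * x)"
    using x x1 p avg_deg_ge_one[OF lam sm] by (simp add: mult_left_le_one_le)
  also have "\<dots> = c * x" unfolding c_def by (simp add: algebra_simps)
  finally have Ac: "A \<le> c * x" .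
  have "c * x \<le> c^2 * x" using c1 x by (intro mult_right_mono) (auto simp: power2_eq_square)
  then have "real n * A \<le> real n * c^2 * x"
    using Ac by (simp add: mult_left_mono mult.assoc)
  then have nA: "real n * A \<le> 1" using small unfolding c_def[symmetric] by simp
  have "f_fun (Suc n) lam rho p x \<le> A * (1 - (1 - A)^n * (1 - A^Suc n))"
    using f_fun_le(2)[OF p lam rho x x1] A_def by simp
  also have "\<dots> \<le> A * (real n * A)"
    using one_minus_linear_le_power_mult[OF n A(1) nA] A by (intro mult_left_mono) auto
  also have "\<dots> = real n * A^2" by (simp add: power2_eq_square)
  also have "\<dots> \<le> real n * (c * x)^2" using Ac A by (intro mult_left_mono power_mono) auto
  finally show ?thesis unfolding c_def by (simp add: power_mult_distrib)
qed

lemma diff_square_le_quarter: "r - r^2 \<le> (1/4 :: real)"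
proof -
  have "0 \<le> (r - 1/2)^2" by simp
  also have "\<dots> = 1/4 - (r - r^2)" by algebra
  finally show ?thesis by simp
qed

text \<open>With r = \<surd>x and U = 1/r - 1, the arguments of the minimum are the bounds
  x + (1 - x) U x = r - r^3 + r^4 and x + (1 - x) binom_trunc3 U x on A(x), valid as soon as
  p \<lambda>'(1) \<le> U, i.e. (1 + p \<lambda>'(1))^2 x \<le> 1.\<close>
definition f2_majorant :: "real \<Rightarrow> real" where
  "f2_majorant x = maj2 (min (sqrt x - sqrt x ^ 3 + sqrt x ^ 4)
                            (x + (1 - x) * binom_trunc3 (1 / sqrt x - 1) x))"

lemma isCont_f2_majorant: "0 < x \<Longrightarrow> isCont f2_majorant x"
  unfolding f2_majorant_def maj2_def binom_trunc3_def by (intro continuous_intros) auto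

lemma f2_majorant_lt:
  assumes "0 < x" "x < 1"
  shows "f2_majorant x < x"
proof -
  define r where "r = sqrt x"
  have r: "0 < r" "r < 1" "x = r^2" using assms unfolding r_def by auto
  have "(1/r - 1) * x = r - r^2" unfolding r(3) using r by (simp add: field_simps power2_eq_square)
  then have "(1/r - 1) * x \<le> 1/4" using diff_square_le_quarter by simp
  then have "0 \<le> binom_trunc3 (1/r - 1) x"
    using binom_trunc3_mono[of 0 "1/r - 1" x] r assms by (simp add: binom_trunc3_def)
  moreover have "r^3 \<le> r" using power_decreasing[of 1 3 r] r by simp
  ultimately have m0: "0 \<le> min (r - r^3 + r^4) (x + (1 - x) * binom_trunc3 (1/r - 1) x)"
    using r assms by (auto intro!: add_nonneg_nonneg mult_nonneg_nonneg)
  show ?thesis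
  proof (cases "1/2 \<le> r")
    case True
    have "f2_majorant x \<le> maj2 (r - r^3 + r^4)"
      unfolding f2_majorant_def r_def[symmetric] using m0 quartic_le_one[of r] r by (intro maj2_mono) auto
    also have "\<dots> < x" using maj2_quartic_lt[OF True r(2)] r by simp
    finally show ?thesis .
  next
    case False
    have "x + (1 - x) * binom_trunc3 (1/r - 1) x \<le> A_majorant_poly r"
      using binom_trunc3_le_A_majorant_poly[of r] r False by simp
    then have "f2_majorant x \<le> maj2 (A_majorant_poly r)"
      unfolding f2_majorant_def r_def[symmetric] using m0 A_majorant_poly_le_one[of r] r False
      by (intro maj2_mono) auto
    also have "\<dots> < x" using maj2_A_majorant_poly_lt[of r] r False by simp
    finally show ?thesis .
  qed
qed

lemma f_fun_two_le:
  assumes p: "0 \<le> p" "p \<le> 1" and lam: "degree_dist lam" and rho: "degree_dist rho"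
    and sm: "summable (\<lambda>i. real i * lam i)" and x: "0 < x"
    and small: "(1 + p * avg_deg lam)^2 * x < 1"
  shows "f_fun 2 lam rho p x \<le> f2_majorant x"
proof -
  define u where "u = p * avg_deg lam"
  define r where "r = sqrt x"
  define U where "U = 1 / r - 1"
  have u0: "0 \<le> u" using p avg_deg_ge_one[OF lam sm] unfolding u_def by simp
  have "1 * x \<le> (1 + u)^2 * x" using u0 x by (intro mult_right_mono one_le_power) auto
  then have x1: "x < 1" using small unfolding u_def[symmetric] by simp
  have r: "0 < r" "r < 1" "x = r^2" using x x1 unfolding r_def by auto
  have "((1 + u) * r)^2 < 1" using small r unfolding u_def[symmetric] by (simp add: power_mult_distrib)
  then have "(1 + u) * r < 1" by (simp add: abs_square_less_1 abs_less_iff)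
  then have uU: "u \<le> U" unfolding U_def using r by (simp add: field_simps)
  have Ux: "U * x = r - r^2" unfolding U_def r(3) using r by (simp add: field_simps power2_eq_square)
  also have "\<dots> \<le> 1/4" by (rule diff_square_le_quarter)
  finally have Ux4: "U * x \<le> 1/4" .
  have ux: "u * x \<le> U * x" using uU x by (intro mult_right_mono) auto
  have t: "0 \<le> p * x" "p * x \<le> 1" using p x x1 by (auto simp: mult_le_one)
  have s1: "1 - genfun lam (1 - p * x) \<le> U * x"
    using one_minus_genfun_le[OF lam sm t] ux unfolding u_def by (simp add: ac_simps)
  have "1 - genfun lam (1 - p * x) \<le> binom_trunc3 (avg_deg lam) (p * x)"
    using one_minus_genfun_le_binom_trunc3[OF lam sm t] ux Ux4 unfolding u_def by (simp add: ac_simps)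
  also have "\<dots> \<le> binom_trunc3 u x"
    using binom_trunc3_scale_le[of p "avg_deg lam" x] p avg_deg_ge_one[OF lam sm] x ux Ux4
    unfolding u_def by simp
  also have "\<dots> \<le> binom_trunc3 U x" using binom_trunc3_mono[OF u0 uU] x x1 Ux4 by simp
  finally have s2: "1 - genfun lam (1 - p * x) \<le> binom_trunc3 U x" .
  define A where "A = A_fun lam p x"
  have A: "0 \<le> A" "A \<le> 1" using A_fun_bounds[OF p lam] x x1 A_def by auto
  have "A \<le> x + (1 - x) * (U * x)" using A_fun_le[OF _ s1] x1 A_def by simp
  also have "\<dots> = r - r^3 + r^4" unfolding Ux unfolding r(3) by algebra
  finally have A1: "A \<le> r - r^3 + r^4" .
  have A2: "A \<le> x + (1 - x) * binom_trunc3 U x" using A_fun_le[OF _ s2] x1 A_def by simp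
  have "f_fun 2 lam rho p x \<le> A * (1 - (1 - A)^1 * (1 - A^2))"
    using f_fun_le(2)[OF p lam rho, of x 1] x x1 A_def by (simp add: numeral_2_eq_2)
  also have "\<dots> = maj2 A" unfolding maj2_def by algebra
  also have "\<dots> \<le> f2_majorant x"
    unfolding f2_majorant_def r_def[symmetric] U_def[symmetric]
    using A A1 A2 quartic_le_one[of r] r by (intro maj2_mono) auto
  finally show ?thesis .
qed

lemma f_fun_majorant:
  assumes a: "2 \<le> a" and p: "0 \<le> p" "p \<le> 1" and lam: "degree_dist lam" and rho: "degree_dist rho"
    and sm: "summable (\<lambda>i. real i * lam i)"
  obtains g where "\<And>x. 0 < x \<Longrightarrow> real (a - 1) * (1 + p * avg_deg lam)^2 * x < 1 \<Longrightarrow>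
    f_fun a lam rho p x \<le> g x \<and> g x < x \<and> isCont g x"
proof (cases "a = 2")
  case True
  show ?thesis
  proof (rule that[of f2_majorant])
    fix x :: real assume x: "0 < x" "real (a - 1) * (1 + p * avg_deg lam)^2 * x < 1"
    then have small: "(1 + p * avg_deg lam)^2 * x < 1" using True by simp
    moreover have "1 * x \<le> (1 + p * avg_deg lam)^2 * x"
      using p avg_deg_ge_one[OF lam sm] x by (intro mult_right_mono one_le_power) auto
    ultimately have "x < 1" by simp
    then show "f_fun a lam rho p x \<le> f2_majorant x \<and> f2_majorant x < x \<and> isCont f2_majorant x"
      using f_fun_two_le[OF p lam rho sm x(1) small] f2_majorant_lt[OF x(1)]
        isCont_f2_majorant[OF x(1)] True by simp
  qed
next
  case False
  define K where "K = real (a - 1) * (1 + p * avg_deg lam)^2"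
  define n where "n = a - 1"
  have n: "a = Suc n" "2 \<le> n" using a False unfolding n_def by auto
  show ?thesis
  proof (rule that[of "\<lambda>x. K * x^2"])
    fix x :: real assume x: "0 < x" "real (a - 1) * (1 + p * avg_deg lam)^2 * x < 1"
    then have "f_fun a lam rho p x \<le> K * x^2"
      using f_fun_le_quadratic[OF n(2) p lam rho sm] n unfolding K_def by simp
    moreover have "K * x^2 < x" using x unfolding K_def by (simp add: power2_eq_square)
    ultimately show "f_fun a lam rho p x \<le> K * x^2 \<and> K * x^2 < x \<and> isCont (\<lambda>x. K * x^2) x"
      by simp
  qed
qed

theorem theorem4:
  fixes a :: nat and p eps :: real and lam rho :: "nat \<Rightarrow> real"
  assumes "a \<ge> 2"
    and "0 \<le> p" and "p \<le> 1"
    and "degree_dist lam" and "degree_dist rho"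
    and "summable (\<lambda>i. real i * lam i)"
    and "0 \<le> eps" and "eps \<le> 1"
    and "eps < 1 / (real (a - 1) * (1 + p * avg_deg lam) ^ 2)"
  shows "DE_seq a lam rho p eps \<longlonglongrightarrow> 0"
proof -
  define K where "K = real (a - 1) * (1 + p * avg_deg lam) ^ 2"
  obtain g where g: "\<And>x. 0 < x \<Longrightarrow> K * x < 1 \<Longrightarrow> f_fun a lam rho p x \<le> g x \<and> g x < x \<and> isCont g x"
    using f_fun_majorant[OF assms(1-6)] unfolding K_def by blast
  have "0 \<le> p * avg_deg lam" using assms(2) avg_deg_ge_one[OF assms(4,6)] by simp
  then have "0 < K" unfolding K_def using assms(1) by (intro mult_pos_pos) auto
  then have K_eps: "K * eps < 1" using assms(9) unfolding K_def[symmetric] by (simp add: field_simps)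
  have "(\<lambda>l. (f_fun a lam rho p ^^ l) eps) \<longlonglongrightarrow> 0"
  proof (rule funpow_tendsto_0_of_majorant)
    fix x assume x: "0 < x" "x \<le> eps"
    then have "K * x < 1" using mult_left_mono[OF x(2), of K] \<open>0 < K\<close> K_eps by linarith
    moreover have "0 \<le> f_fun (Suc (a - 1)) lam rho p x"
      using f_fun_le(1) assms(2-5) x assms(8) by simp
    ultimately show "0 \<le> f_fun a lam rho p x \<and> f_fun a lam rho p x \<le> g x \<and> g x < x \<and> isCont g x"
      using g[OF x(1)] assms(1) by (simp add: Suc_diff_1)
  qed (use f_fun_zero[OF assms(4)] assms(7) in auto)
  then show ?thesis unfolding DE_seq_def[abs_def] .
qed

end
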